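(* For all integers $n\ge 3$ and real numbers $a\ge1$, $x\in(0,\pi)$, we have $S_{n,a}(x)\ge S_{n-2,a}(x)$.
   Context: For a real number $a$ and integers $0\le m$, the binomial coefficient is $\binom{m+a}{m}=\frac{(a+1)(a+2)\cdots(a+m)}{m!}$ (equal to $1$ when $m=0$). For an integer $n\ge1$ and real $a$, $S_{n,a}(x)=\sum_{j=1}^n\binom{n+a-j}{n-j}\sin(jx)$. *)

theory Defs
  imports Complex_Main
begin

definition binom_shift :: "nat \<Rightarrow> real \<Rightarrow> real" where
  "binom_shift m a = (real m + a) gchoose m"

definition S :: "nat \<Rightarrow> real \<Rightarrow> real \<Rightarrow> real" where
  "S n a x = (\<Sum>j=1..n. binom_shift (n - j) a * sin (real j * x))"

end

theory Submission
  imports Defs "HOL-Computational_Algebra.Formal_Power_Series"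
begin

unbundle fps_syntax

text \<open>
  In generating-function form, \<open>S n a x\<close> is the \<open>n\<close>-th coefficient of
  \<open>(\<Sum>j. sin (j x) X\<^sup>j) * (1 - X) powr (-(a + 1))\<close>, so \<open>S n a x - S (n - 2) a x\<close> is
  the \<open>n\<close>-th coefficient of the same product multiplied by \<open>1 - X\<^sup>2\<close>.
  Splitting \<open>1 - X\<^sup>2 = (1 - X)\<^sup>2 * (1 + X) / (1 - X)\<close>, this becomes the product of
  \<open>(1 - X) powr (1 - a)\<close>, whose coefficients are nonnegative for \<open>a \<ge> 1\<close>, and
  \<open>(1 + X) * \<Sum>m. P\<^sub>m X\<^sup>m\<close> with the partial sums \<open>P\<^sub>m = \<Sum>j=1..m. sin (j x)\<close>.
  The coefficients \<open>P\<^sub>m + P\<^sub>m\<^sub>-\<^sub>1\<close> of the latter equal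
  \<open>cos (x/2) (1 - cos (m x)) / sin (x/2) \<ge> 0\<close> on \<open>0 < x < \<pi>\<close>.
\<close>

lemma fps_nth_one_minus_X_mult:
  fixes f :: "'a::comm_ring_1 fps"
  shows "((1 - fps_X) * f) $ m = (if m = 0 then f $ 0 else f $ m - f $ (m - 1))"
  by (simp add: algebra_simps)

lemma binom_shift_Suc:
  "binom_shift (Suc k) c = binom_shift k c + binom_shift (Suc k) (c - 1)"
proof -
  have "binom_shift (Suc k) c = ((real k + c) + 1) gchoose Suc k"
    unfolding binom_shift_def by (simp add: algebra_simps)
  also have "\<dots> = ((real k + c) gchoose k) + ((real k + c) gchoose Suc k)"
    by (rule gbinomial_Suc_Suc)
  finally show ?thesis
    unfolding binom_shift_def by (simp add: algebra_simps)
qed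

lemma binom_shift_nonneg:
  assumes "c \<ge> -1"
  shows "binom_shift m c \<ge> 0"
proof -
  have "binom_shift m c = pochhammer (c + 1) m / fact m"
    unfolding binom_shift_def gbinomial_pochhammer' by (simp add: algebra_simps)
  moreover have "pochhammer (c + 1) m \<ge> 0"
  proof (cases "c + 1 = 0")
    case True
    then show ?thesis by (cases m) (simp_all add: pochhammer_0_left)
  next
    case False
    with assms show ?thesis by (intro pochhammer_nonneg) simp
  qed
  ultimately show ?thesis by simp
qed

definition binom_shift_fps :: "real \<Rightarrow> real fps" where
  "binom_shift_fps c = Abs_fps (\<lambda>m. binom_shift m c)"

lemma one_minus_X_mult_binom_shift_fps:
  "(1 - fps_X) * binom_shift_fps c = binom_shift_fps (c - 1)"
proof (rule fps_ext)
  fix m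
  show "((1 - fps_X) * binom_shift_fps c) $ m = binom_shift_fps (c - 1) $ m"
    using binom_shift_Suc[of "m - 1" c]
    by (cases m) (simp_all add: fps_nth_one_minus_X_mult binom_shift_fps_def binom_shift_def)
qed

definition sin_fps :: "real \<Rightarrow> real fps" where
  "sin_fps x = Abs_fps (\<lambda>j. sin (real j * x))"

definition sin_partial_sum_fps :: "real \<Rightarrow> real fps" where
  "sin_partial_sum_fps x = Abs_fps (\<lambda>m. \<Sum>j=1..m. sin (real j * x))"

lemma one_minus_X_mult_sin_partial_sum_fps:
  "(1 - fps_X) * sin_partial_sum_fps x = sin_fps x"
proof (rule fps_ext)
  fix m
  show "((1 - fps_X) * sin_partial_sum_fps x) $ m = sin_fps x $ m"
    by (cases m) (auto simp: fps_nth_one_minus_X_mult sin_partial_sum_fps_def sin_fps_def)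
qed

lemma S_eq_fps_nth: "S n a x = (sin_fps x * binom_shift_fps a) $ n"
proof -
  have "(sin_fps x * binom_shift_fps a) $ n = (\<Sum>j=0..n. sin (real j * x) * binom_shift (n - j) a)"
    by (simp add: fps_mult_nth sin_fps_def binom_shift_fps_def)
  also have "\<dots> = (\<Sum>j=1..n. sin (real j * x) * binom_shift (n - j) a)"
    by (simp add: sum.atLeast_Suc_atMost)
  finally show ?thesis
    unfolding S_def by (simp add: mult.commute)
qed

lemma sin_sum_telescope:
  "2 * sin (x / 2) * (\<Sum>j=1..m. sin (real j * x)) = cos (x / 2) - cos ((real m + 1 / 2) * x)"
proof (induction m)
  case 0
  then show ?case by simp
next
  case (Suc m)
  have "(real m + 1 / 2) * x = (real m + 1) * x - x / 2"
    and "(real m + 1 + 1 / 2) * x = (real m + 1) * x + x / 2"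
    by (simp_all add: algebra_simps)
  then have "2 * sin (x / 2) * sin ((real m + 1) * x)
      = cos ((real m + 1 / 2) * x) - cos ((real m + 1 + 1 / 2) * x)"
    by (simp add: cos_diff cos_add)
  with Suc show ?case by (simp add: algebra_simps)
qed

lemma sin_sum_plus_prev_nonneg:
  assumes "0 < x" "x < pi"
  shows "0 \<le> (\<Sum>j=1..m. sin (real j * x)) + (\<Sum>j=1..m - 1. sin (real j * x))"
proof (cases m)
  case 0
  then show ?thesis by simp
next
  case (Suc k)
  have sin_pos: "sin (x / 2) > 0" and cos_pos: "cos (x / 2) > 0"
    using assms by (auto intro: sin_gt_zero cos_gt_zero_pi)
  have "(real k + 1 / 2) * x = real m * x - x / 2" and "(real m + 1 / 2) * x = real m * x + x / 2"
    using Suc by (simp_all add: algebra_simps)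
  then have "cos ((real k + 1 / 2) * x) + cos ((real m + 1 / 2) * x) = 2 * cos (real m * x) * cos (x / 2)"
    by (simp add: cos_diff cos_add)
  then have "2 * sin (x / 2) * ((\<Sum>j=1..m. sin (real j * x)) + (\<Sum>j=1..k. sin (real j * x)))
      = 2 * cos (x / 2) * (1 - cos (real m * x))"
    unfolding distrib_left sin_sum_telescope by (simp add: algebra_simps)
  also have "\<dots> \<ge> 0"
    using cos_pos by simp
  finally show ?thesis
    using sin_pos Suc by (simp add: zero_le_mult_iff)
qed

lemma one_plus_X_mult_sin_partial_sum_fps_nonneg:
  assumes "0 < x" "x < pi"
  shows "((1 + fps_X) * sin_partial_sum_fps x) $ m \<ge> 0"
  using sin_sum_plus_prev_nonneg[OF assms, of m]
  by (cases m) (simp_all add: sin_partial_sum_fps_def algebra_simps)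

theorem lemma2p6:
  fixes n :: nat and a x :: real
  assumes "n \<ge> 3" and "a \<ge> 1" and "0 < x" and "x < pi"
  shows "S n a x \<ge> S (n - 2) a x"
proof -
  let ?B = "binom_shift_fps a" and ?P = "sin_partial_sum_fps x"
  have "(fps_X ^ 2 * (sin_fps x * ?B)) $ n = (sin_fps x * ?B) $ (n - 2)"
    using assms(1) by (simp add: fps_X_power_mult_nth)
  then have "S n a x - S (n - 2) a x = ((1 - fps_X ^ 2) * (sin_fps x * ?B)) $ n"
    by (simp add: S_eq_fps_nth left_diff_distrib)
  also have "(1 - fps_X ^ 2) * (sin_fps x * ?B)
      = ((1 + fps_X) * ?P) * ((1 - fps_X) * ((1 - fps_X) * ?B))"
    unfolding one_minus_X_mult_sin_partial_sum_fps[symmetric]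
    by (simp add: power2_eq_square algebra_simps)
  also have "\<dots> = ((1 + fps_X) * ?P) * binom_shift_fps (a - 2)"
    by (simp add: one_minus_X_mult_binom_shift_fps)
  also have "(\<dots>) $ n \<ge> 0"
    using one_plus_X_mult_sin_partial_sum_fps_nonneg[OF assms(3,4)]
      binom_shift_nonneg[of "a - 2"] assms(2)
    unfolding fps_mult_nth[of "(1 + fps_X) * ?P"]
    by (intro sum_nonneg mult_nonneg_nonneg) (simp_all add: binom_shift_fps_def)
  finally show ?thesis by simp
qed

end
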